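(* Let $G$ be a simple signed digraph without vertices of in-degree $0$ or $2$. Then at least one Boolean network on $G$ is not synchronizing.
   Context: A signed digraph on $V$ is $(V,E)$ with $E\subseteq V\times V\times\{-1,1\}$ (arc from $j$ to $i$ of sign $s$; loops allowed); it is simple if it never has both a positive and a negative arc from one vertex to another. In-degree counts in-neighbors. A Boolean network (BN) is $f:\{0,1\}^V\to\{0,1\}^V$; its signed interaction digraph has a positive (negative) arc from $j$ to $i$ iff for some $x$ with $x_j=0$, $f_i(x+e_j)-f_i(x)$ is positive (negative). A BN on $G$ is one whose signed interaction digraph is $G$. $f^i(x)$ is $x$ with $x_i$ replaced by $f_i(x)$; $f^{i_1\cdots i_\ell}=f^{i_\ell}\circ\cdots\circ f^{i_1}$; $f$ is synchronizing if $f^w$ is a constant map for some word $w$ over $V$. *)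

theory Defs
  imports Main
begin

text \<open>Vertex set V = the finite type 'v; configurations x \<in> {0,1}^V are maps 'v \<Rightarrow> bool
  (True = 1). An arc from j to i of sign s is the triple (j, i, s).\<close>

type_synonym 'v sdigraph = "('v \<times> 'v \<times> int) set"

definition signed_digraph :: "'v sdigraph \<Rightarrow> bool" where
  "signed_digraph E \<longleftrightarrow> (\<forall>(j, i, s) \<in> E. s = 1 \<or> s = -1)"

definition simple_sdigraph :: "'v sdigraph \<Rightarrow> bool" where
  "simple_sdigraph E \<longleftrightarrow> (\<forall>j i. \<not> ((j, i, 1) \<in> E \<and> (j, i, -1) \<in> E))"

definition in_degree :: "'v sdigraph \<Rightarrow> 'v \<Rightarrow> nat" where
  "in_degree E i = card {j. \<exists>s. (j, i, s) \<in> E}"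

definition interaction_digraph :: "(('v \<Rightarrow> bool) \<Rightarrow> ('v \<Rightarrow> bool)) \<Rightarrow> 'v sdigraph" where
  "interaction_digraph f =
     {(j, i, 1) | j i. \<exists>x. \<not> x j \<and> \<not> f x i \<and> f (x(j := True)) i} \<union>
     {(j, i, -1) | j i. \<exists>x. \<not> x j \<and> f x i \<and> \<not> f (x(j := True)) i}"

definition upd_at :: "(('v \<Rightarrow> bool) \<Rightarrow> ('v \<Rightarrow> bool)) \<Rightarrow> 'v \<Rightarrow> ('v \<Rightarrow> bool) \<Rightarrow> ('v \<Rightarrow> bool)" where
  "upd_at f i x = x(i := f x i)"

text \<open>f^{i_1 ... i_l} = f^{i_l} o ... o f^{i_1}: apply i_1 first.\<close>
fun upd_word :: "(('v \<Rightarrow> bool) \<Rightarrow> ('v \<Rightarrow> bool)) \<Rightarrow> 'v list \<Rightarrow> ('v \<Rightarrow> bool) \<Rightarrow> ('v \<Rightarrow> bool)" where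
  "upd_word f [] x = x"
| "upd_word f (i # w) x = upd_word f w (upd_at f i x)"

definition synchronizing :: "(('v \<Rightarrow> bool) \<Rightarrow> ('v \<Rightarrow> bool)) \<Rightarrow> bool" where
  "synchronizing f \<longleftrightarrow> (\<exists>w c. \<forall>x. upd_word f w x = c)"

end

theory Submission
  imports Defs
begin

text \<open>Give every vertex i, with in-neighbourhood A, a local rule that is monotone in the literals
  (x_j for a positive arc j \<rightarrow> i, \<not> x_j for a negative one), self-dual, and depends on every
  literal in A: fix a \<in> A and take the disjunction of the other literals if literal a holds,
  their conjunction otherwise. All of A is essential precisely because |A| \<noteq> 2; for |A| = 2 the
  only monotone self-dual functions are projections. Monotonicity makes the signs of the
  interaction digraph those of G. Self-duality means that the network commutes with
  complementation, hence so does every f^w; so the image of f^w is closed under complement and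
  f^w is never constant.\<close>

definition self_dual_bn :: "(('v \<Rightarrow> bool) \<Rightarrow> ('v \<Rightarrow> bool)) \<Rightarrow> bool" where
  "self_dual_bn f \<longleftrightarrow> (\<forall>x. f (\<lambda>m. \<not> x m) = (\<lambda>i. \<not> f x i))"

lemma upd_word_self_dual:
  assumes "self_dual_bn f"
  shows "upd_word f w (\<lambda>m. \<not> x m) = (\<lambda>m. \<not> upd_word f w x m)"
proof (induction w arbitrary: x)
  case Nil
  show ?case by simp
next
  case (Cons i w)
  have "upd_at f i (\<lambda>m. \<not> x m) = (\<lambda>m. \<not> upd_at f i x m)"
    using assms unfolding self_dual_bn_def upd_at_def by (simp add: fun_eq_iff)
  then show ?case using Cons by simp
qed

lemma self_dual_not_synchronizing:
  assumes "self_dual_bn f"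
  shows "\<not> synchronizing f"
proof
  assume "synchronizing f"
  then obtain w c where const: "\<And>x. upd_word f w x = c"
    unfolding synchronizing_def by blast
  have "c = (\<lambda>m. \<not> c m)"
    using upd_word_self_dual[OF assms, of w "\<lambda>_. True"] by (simp add: const)
  then show False by (simp add: fun_eq_iff)
qed

definition essential :: "(('v \<Rightarrow> bool) \<Rightarrow> bool) \<Rightarrow> 'v \<Rightarrow> bool" where
  "essential g j \<longleftrightarrow> (\<exists>l. g (l(j := False)) \<noteq> g (l(j := True)))"

lemma mono_fun_upd_False_True:
  assumes "mono g" and "g (l(j := False))"
  shows "g (l(j := True))"
  using monoD[OF assms(1), of "l(j := False)" "l(j := True)"] assms(2)
  by (simp add: le_fun_def)

lemma essential_mono_iff:
  assumes "mono g"
  shows "essential g j \<longleftrightarrow> (\<exists>l. \<not> g (l(j := False)) \<and> g (l(j := True)))"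
  unfolding essential_def using mono_fun_upd_False_True[OF assms] by blast

lemma mem_interaction_digraph:
  "(j, i, s) \<in> interaction_digraph f \<longleftrightarrow>
     s = 1 \<and> (\<exists>x. \<not> x j \<and> \<not> f x i \<and> f (x(j := True)) i) \<or>
     s = -1 \<and> (\<exists>x. \<not> x j \<and> f x i \<and> \<not> f (x(j := True)) i)"
  unfolding interaction_digraph_def by auto

text \<open>The literal map x \<mapsto> (\<lambda>m. x m = \<sigma> m) is an involution, and it sends x_j = False to
  literal \<not> \<sigma> j and x_j = True to literal \<sigma> j.\<close>
lemma ex_switch_literals:
  "(\<exists>x. \<not> x j \<and> P (\<lambda>m. x m = \<sigma> m) (\<lambda>m. (x(j := True)) m = \<sigma> m)) \<longleftrightarrow>
   (\<exists>l. P (l(j := \<not> \<sigma> j)) (l(j := \<sigma> j)))"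
proof
  assume "\<exists>x. \<not> x j \<and> P (\<lambda>m. x m = \<sigma> m) (\<lambda>m. (x(j := True)) m = \<sigma> m)"
  then obtain x where "\<not> x j" and P: "P (\<lambda>m. x m = \<sigma> m) (\<lambda>m. (x(j := True)) m = \<sigma> m)"
    by blast
  define l where "l = (\<lambda>m. x m = \<sigma> m)"
  have "l(j := \<not> \<sigma> j) = (\<lambda>m. x m = \<sigma> m)"
    and "l(j := \<sigma> j) = (\<lambda>m. (x(j := True)) m = \<sigma> m)"
    using \<open>\<not> x j\<close> by (auto simp: l_def fun_eq_iff)
  then have "P (l(j := \<not> \<sigma> j)) (l(j := \<sigma> j))"
    using P by simp
  then show "\<exists>l. P (l(j := \<not> \<sigma> j)) (l(j := \<sigma> j))" by blast
next
  assume "\<exists>l. P (l(j := \<not> \<sigma> j)) (l(j := \<sigma> j))"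
  then obtain l where P: "P (l(j := \<not> \<sigma> j)) (l(j := \<sigma> j))" by blast
  define x where "x = (\<lambda>m. l m = \<sigma> m)(j := False)"
  have "(\<lambda>m. x m = \<sigma> m) = l(j := \<not> \<sigma> j)"
    and "(\<lambda>m. (x(j := True)) m = \<sigma> m) = l(j := \<sigma> j)"
    by (auto simp: x_def fun_eq_iff)
  then have "P (\<lambda>m. x m = \<sigma> m) (\<lambda>m. (x(j := True)) m = \<sigma> m)"
    using P by simp
  moreover have "\<not> x j" by (simp add: x_def)
  ultimately show "\<exists>x. \<not> x j \<and> P (\<lambda>m. x m = \<sigma> m) (\<lambda>m. (x(j := True)) m = \<sigma> m)"
    by blast
qed

lemma mem_interaction_digraph_literal_rules:
  assumes "\<And>i. mono (g i)"
  shows "(j, i, s) \<in> interaction_digraph (\<lambda>x i. g i (\<lambda>m. x m = \<sigma> i m)) \<longleftrightarrow>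
           essential (g i) j \<and> s = (if \<sigma> i j then 1 else -1)"
proof -
  have pos: "(\<exists>x. \<not> x j \<and> \<not> g i (\<lambda>m. x m = \<sigma> i m) \<and> g i (\<lambda>m. (x(j := True)) m = \<sigma> i m))
      \<longleftrightarrow> (\<exists>l. \<not> g i (l(j := \<not> \<sigma> i j)) \<and> g i (l(j := \<sigma> i j)))"
    using ex_switch_literals[of j "\<lambda>l0 l1. \<not> g i l0 \<and> g i l1" "\<sigma> i"] by simp
  have neg: "(\<exists>x. \<not> x j \<and> g i (\<lambda>m. x m = \<sigma> i m) \<and> \<not> g i (\<lambda>m. (x(j := True)) m = \<sigma> i m))
      \<longleftrightarrow> (\<exists>l. g i (l(j := \<not> \<sigma> i j)) \<and> \<not> g i (l(j := \<sigma> i j)))"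
    using ex_switch_literals[of j "\<lambda>l0 l1. g i l0 \<and> \<not> g i l1" "\<sigma> i"] by simp
  show ?thesis
    unfolding mem_interaction_digraph pos neg essential_mono_iff[OF assms]
    using mono_fun_upd_False_True[OF assms] by (cases "\<sigma> i j") auto
qed

lemma self_dual_bn_literal_rules:
  assumes "\<And>i l. g i (\<lambda>m. \<not> l m) = (\<not> g i l)"
  shows "self_dual_bn (\<lambda>x i. g i (\<lambda>m. x m = \<sigma> i m))"
proof -
  have "(\<lambda>m. (\<not> x m) = \<sigma> i m) = (\<lambda>m. \<not> (x m = \<sigma> i m))" for x i
    by auto
  then have "g i (\<lambda>m. (\<not> x m) = \<sigma> i m) = (\<not> g i (\<lambda>m. x m = \<sigma> i m))" for x i
    by (simp only: assms)
  then show ?thesis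
    unfolding self_dual_bn_def by (intro allI ext)
qed

definition pivot_rule :: "'v set \<Rightarrow> 'v \<Rightarrow> ('v \<Rightarrow> bool) \<Rightarrow> bool" where
  "pivot_rule A a l =
     (if A - {a} = {} then l a
      else if l a then (\<exists>j\<in>A - {a}. l j) else (\<forall>j\<in>A - {a}. l j))"

lemma mono_pivot_rule: "mono (pivot_rule A a)"
  by (rule monoI) (auto simp: pivot_rule_def le_fun_def split: if_splits)

lemma pivot_rule_complement: "pivot_rule A a (\<lambda>m. \<not> l m) = (\<not> pivot_rule A a l)"
  unfolding pivot_rule_def by auto

lemma essential_pivot_rule_iff:
  assumes "a \<in> A" and "card A \<noteq> 2"
  shows "essential (pivot_rule A a) j \<longleftrightarrow> j \<in> A"
proof
  assume "essential (pivot_rule A a) j"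
  then obtain l where "pivot_rule A a (l(j := False)) \<noteq> pivot_rule A a (l(j := True))"
    unfolding essential_def by blast
  then show "j \<in> A"
    using assms(1) unfolding pivot_rule_def by (auto split: if_splits)
next
  assume "j \<in> A"
  show "essential (pivot_rule A a) j"
  proof (cases "A - {a} = {}")
    case True
    then show ?thesis using \<open>j \<in> A\<close> unfolding essential_def pivot_rule_def by auto
  next
    case False
    then obtain b where b: "b \<in> A - {a}" by blast
    have "A \<noteq> {a, b}" using assms(2) b by auto
    then obtain c where c: "c \<in> A - {a, b}" using assms(1) b by blast
    show ?thesis
    proof (cases "j = a")
      case True
      then have "\<not> pivot_rule A a ((\<lambda>m. m = b)(j := False))"
        and "pivot_rule A a ((\<lambda>m. m = b)(j := True))"
        using b c unfolding pivot_rule_def by auto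
      then show ?thesis unfolding essential_def by metis
    next
      case False
      then have "\<not> pivot_rule A a ((\<lambda>m. m = a)(j := False))"
        and "pivot_rule A a ((\<lambda>m. m = a)(j := True))"
        using b \<open>j \<in> A\<close> unfolding pivot_rule_def by auto
      then show ?thesis unfolding essential_def by metis
    qed
  qed
qed

definition in_nbrs :: "'v sdigraph \<Rightarrow> 'v \<Rightarrow> 'v set" where
  "in_nbrs G i = {j. \<exists>s. (j, i, s) \<in> G}"

lemma mem_signed_simple_sdigraph:
  assumes "signed_digraph G" and "simple_sdigraph G"
  shows "(j, i, s) \<in> G \<longleftrightarrow> j \<in> in_nbrs G i \<and> s = (if (j, i, 1) \<in> G then 1 else -1)"
  using assms unfolding signed_digraph_def simple_sdigraph_def in_nbrs_def by fastforce

theorem proposition1: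
  fixes G :: "('v::finite) sdigraph"
  assumes "signed_digraph G"
    and "simple_sdigraph G"
    and "\<forall>i. in_degree G i \<noteq> 0 \<and> in_degree G i \<noteq> 2"
  shows "\<exists>f :: ('v \<Rightarrow> bool) \<Rightarrow> ('v \<Rightarrow> bool). interaction_digraph f = G \<and> \<not> synchronizing f"
proof -
  define a where "a i = (SOME j. j \<in> in_nbrs G i)" for i
  define g where "g i = pivot_rule (in_nbrs G i) (a i)" for i
  define f where "f x i = g i (\<lambda>m. x m = ((m, i, 1) \<in> G))" for x i
  have card: "card (in_nbrs G i) \<noteq> 0" "card (in_nbrs G i) \<noteq> 2" for i
    using assms(3) unfolding in_degree_def in_nbrs_def by auto
  have "in_nbrs G i \<noteq> {}" for i
    using card(1)[of i] by (metis card.empty)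
  then have "a i \<in> in_nbrs G i" for i
    unfolding a_def by (simp add: some_in_eq)
  then have essential: "essential (g i) j \<longleftrightarrow> j \<in> in_nbrs G i" for i j
    unfolding g_def by (rule essential_pivot_rule_iff[OF _ card(2)])
  have mono: "mono (g i)" for i
    unfolding g_def by (rule mono_pivot_rule)
  have "(j, i, s) \<in> interaction_digraph f \<longleftrightarrow> (j, i, s) \<in> G" for j i s
  proof -
    have "(j, i, s) \<in> interaction_digraph f \<longleftrightarrow>
        essential (g i) j \<and> s = (if (j, i, 1) \<in> G then 1 else -1)"
      unfolding f_def by (rule mem_interaction_digraph_literal_rules[OF mono])
    also have "\<dots> \<longleftrightarrow> (j, i, s) \<in> G"
      unfolding essential by (rule mem_signed_simple_sdigraph[OF assms(1,2), symmetric])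
    finally show ?thesis .
  qed
  then have "interaction_digraph f = G"
    by (simp add: set_eq_iff split_paired_All)
  moreover have "self_dual_bn f"
    unfolding f_def g_def by (rule self_dual_bn_literal_rules) (rule pivot_rule_complement)
  ultimately show ?thesis using self_dual_not_synchronizing by blast
qed

end
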